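(* Let $n$ and $\rho$ be positive integers with $\rho<n/2$, and let ${\cal C}$ be a binary $[n\times n,\,n(n-2\rho),\,2\rho+1]$ linear array code (the paper uses the optimal array code of this kind constructed by Roth). Define the binary code over graphs $\mathcal{C}_{{\cal G}_2}=\{G=(V_n,L)\mid A_G\in{\cal C}\}$. Then $\mathcal{C}_{{\cal G}_2}$ is a linear binary code over graphs of dimension $k_{\cal G}=n(n-2\rho)$ which is $\rho$-node-erasure-correcting.
   Context: $[n]=\{0,\ldots,n-1\}$, $V_n=\{v_0,\ldots,v_{n-1}\}$. A binary graph $G=(V_n,L)$ is a complete directed graph with self loops and labeling $L:V_n\times V_n\to\{0,1\}$; its adjacency matrix is the $n\times n$ matrix $A_G=[a_{i,j}]$ with $a_{i,j}=L(v_i,v_j)$. A cover of an $n\times n$ matrix $\Gamma=[\gamma_{i,j}]$ is a pair $(S,T)$ of subsets of $[n]$ such that $\gamma_{i,j}\neq0$ implies $i\in S$ or $j\in T$; the cover-weight $w(\Gamma)$ is the minimum of $|S|+|T|$ over all covers. An $[n\times n,k,d]$ linear array code over a field is a $k$-dimensional linear space of $n\times n$ matrices over that field in which every nonzero matrix has cover-weight at least $d$ (with $d$ the minimum). A failure of node $i$ erases the labels of all edges $(v_i,v_j)$ and $(v_j,v_i)$, $j\in[n]$ (i.e., row $i$ and column $i$ of $A_G$), with the failed indices known. A code over graphs is $\rho$-node-erasure-correcting if for every graph in the code and any $\rho$ failed nodes, the erased labels are uniquely determined; its dimension is $\log_2$ of its size. *)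

theory Defs
  imports Complex_Main "HOL-Library.Z2" "HOL-Library.Function_Algebras"
begin

text \<open>Binary n x n matrices (and binary labelings of the complete directed graph with
self loops on V_n = {v_0,...,v_(n-1)}) are represented as functions
nat => nat => bit which vanish outside [n] x [n]; vertex v_i is identified with index i.\<close>

type_synonym bmat = "nat \<Rightarrow> nat \<Rightarrow> bit"

definition bscale :: "bit \<Rightarrow> bmat \<Rightarrow> bmat" where
  "bscale c A = (\<lambda>i j. c * A i j)"

definition bmats :: "nat \<Rightarrow> bmat set" where
  "bmats n = {A. \<forall>i j. (n \<le> i \<or> n \<le> j) \<longrightarrow> A i j = 0}"

definition is_cover :: "nat \<Rightarrow> bmat \<Rightarrow> nat set \<Rightarrow> nat set \<Rightarrow> bool" where
  "is_cover n \<Gamma> S T \<longleftrightarrow> S \<subseteq> {..<n} \<and> T \<subseteq> {..<n} \<and>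
     (\<forall>i<n. \<forall>j<n. \<Gamma> i j \<noteq> 0 \<longrightarrow> i \<in> S \<or> j \<in> T)"

definition cover_weight :: "nat \<Rightarrow> bmat \<Rightarrow> nat" where
  "cover_weight n \<Gamma> = Min {card S + card T | S T. is_cover n \<Gamma> S T}"

definition linear_array_code :: "nat \<Rightarrow> nat \<Rightarrow> nat \<Rightarrow> bmat set \<Rightarrow> bool" where
  "linear_array_code n k d C \<longleftrightarrow>
     C \<subseteq> bmats n \<and> module.subspace bscale C \<and> vector_space.dim bscale C = k \<and>
     (\<forall>A\<in>C. A \<noteq> 0 \<longrightarrow> d \<le> cover_weight n A) \<and>
     (\<exists>A\<in>C. A \<noteq> 0 \<and> cover_weight n A = d)"

definition graphs :: "nat \<Rightarrow> bmat set" where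
  "graphs n = bmats n"

definition adj_matrix :: "bmat \<Rightarrow> bmat" where
  "adj_matrix L = (\<lambda>i j. L i j)"

definition graph_code_of :: "nat \<Rightarrow> bmat set \<Rightarrow> bmat set" where
  "graph_code_of n C = {G \<in> graphs n. adj_matrix G \<in> C}"

definition linear_graph_code :: "nat \<Rightarrow> bmat set \<Rightarrow> bool" where
  "linear_graph_code n CG \<longleftrightarrow> CG \<subseteq> graphs n \<and> module.subspace bscale CG"

definition graph_code_dim :: "bmat set \<Rightarrow> real" where
  "graph_code_dim CG = log 2 (real (card CG))"

text \<open>rho-node-erasure-correcting: after the failure of any rho nodes F (which erases row
and column i of the adjacency matrix for every i in F), the erased labels are uniquely
determined by the non-erased ones.\<close>

definition node_erasure_correcting :: "nat \<Rightarrow> nat \<Rightarrow> bmat set \<Rightarrow> bool" where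
  "node_erasure_correcting n \<rho> CG \<longleftrightarrow>
     (\<forall>F. F \<subseteq> {..<n} \<and> card F = \<rho> \<longrightarrow>
       (\<forall>G\<in>CG. \<forall>G'\<in>CG.
          (\<forall>i<n. \<forall>j<n. i \<notin> F \<and> j \<notin> F \<longrightarrow> G i j = G' i j) \<longrightarrow> G = G'))"

end

theory Submission
  imports Defs "HOL-Library.FuncSet"
begin

text \<open>Two codewords that agree off the rows and columns of a set F of failed nodes differ by
a codeword covered by (F, F), whose cover-weight is therefore at most 2|F|. A minimum
cover-weight of 2\<rho> + 1 thus forces them to coincide. The dimension claim is the count
q^k of vectors in a k-dimensional space over GF(q), here q = 2.\<close>

context vector_space
begin

lemma card_span_independent:
  assumes "finite (UNIV :: 'a set)" "finite B" "independent B"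
  shows "card (span B) = card (UNIV :: 'a set) ^ card B"
proof -
  let ?comb = "\<lambda>u. \<Sum>v\<in>B. u v *s v"
  have "span B = ?comb ` (B \<rightarrow>\<^sub>E UNIV)"
  proof -
    have "?comb u = ?comb (restrict u B)" for u
      by (intro sum.cong) auto
    then have "?comb u \<in> ?comb ` (B \<rightarrow>\<^sub>E UNIV)" for u
      by (intro image_eqI[of _ _ "restrict u B"]) simp_all
    then show ?thesis
      unfolding span_finite[OF assms(2)] by auto
  qed
  moreover have "inj_on ?comb (B \<rightarrow>\<^sub>E UNIV)"
  proof (rule inj_onI)
    fix u u' assume u: "u \<in> B \<rightarrow>\<^sub>E UNIV" and u': "u' \<in> B \<rightarrow>\<^sub>E UNIV"
      and eq: "?comb u = ?comb u'"
    have "(\<Sum>v\<in>B. (u v - u' v) *s v) = 0"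
      using eq by (simp add: scale_left_diff_distrib sum_subtractf)
    then have "\<forall>v\<in>B. u v = u' v"
      using assms(3) dependent_finite[OF assms(2)] by (metis right_minus_eq)
    then show "u = u'"
      using u u' by (intro PiE_ext) auto
  qed
  ultimately have "card (span B) = card (B \<rightarrow>\<^sub>E (UNIV :: 'a set))"
    by (simp add: card_image)
  also have "\<dots> = card (UNIV :: 'a set) ^ card B"
    using assms(2) by (simp add: card_PiE)
  finally show ?thesis .
qed

lemma card_subspace_of_dim_pos:
  assumes "finite (UNIV :: 'a set)" "subspace V" "0 < dim V"
  shows "card V = card (UNIV :: 'a set) ^ dim V"
proof -
  obtain B where B: "B \<subseteq> V" "independent B" "V \<subseteq> span B" "card B = dim V"
    by (rule basis_exists)
  \<comment> \<open>Infinite sets have card 0, so a basis of positive dimension is finite.\<close>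
  have "finite B"
    by (rule card_ge_0_finite) (simp add: B(4) assms(3))
  moreover have "span B = V"
    using B(1,3) assms(2) by (simp add: span_subspace)
  ultimately show ?thesis
    using card_span_independent[OF assms(1) _ B(2)] B(4) by simp
qed

end

lemma UNIV_bit: "UNIV = {0, 1 :: bit}"
  by (auto intro: bit.exhaust)

lemma finite_UNIV_bit: "finite (UNIV :: bit set)"
  by (simp add: UNIV_bit)

lemma card_UNIV_bit: "card (UNIV :: bit set) = 2"
  by (simp add: UNIV_bit)

interpretation bmat: vector_space bscale
  by unfold_locales (auto simp: bscale_def fun_eq_iff algebra_simps)

lemma cover_weight_le:
  assumes "is_cover n A S T"
  shows "cover_weight n A \<le> card S + card T"
proof -
  have "{card S + card T | S T. is_cover n A S T}
      \<subseteq> (\<lambda>(S, T). card S + card T) ` (Pow {..<n} \<times> Pow {..<n})"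
    by (auto simp: is_cover_def)
  then have "finite {card S + card T | S T. is_cover n A S T}"
    by (rule finite_subset) auto
  then show ?thesis
    unfolding cover_weight_def using assms by (intro Min_le) auto
qed

lemma is_cover_diff_of_agree:
  assumes "F \<subseteq> {..<n}"
    and "\<forall>i<n. \<forall>j<n. i \<notin> F \<and> j \<notin> F \<longrightarrow> G i j = G' i j"
  shows "is_cover n (G - G') F F"
  unfolding is_cover_def
proof (intro conjI allI impI)
  fix i j assume "i < n" "j < n" "(G - G') i j \<noteq> 0"
  then show "i \<in> F \<or> j \<in> F"
    using assms(2) by (metis diff_self minus_apply)
qed (use assms(1) in auto)

lemma node_erasure_correcting_of_cover_weight:
  assumes "bmat.subspace C" and "\<forall>A\<in>C. A \<noteq> 0 \<longrightarrow> 2 * \<rho> < cover_weight n A"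
  shows "node_erasure_correcting n \<rho> C"
  unfolding node_erasure_correcting_def
proof (intro allI impI ballI)
  fix F G G'
  assume F: "F \<subseteq> {..<n} \<and> card F = \<rho>" and G: "G \<in> C" "G' \<in> C"
    and agree: "\<forall>i<n. \<forall>j<n. i \<notin> F \<and> j \<notin> F \<longrightarrow> G i j = G' i j"
  have "G - G' \<in> C"
    using assms(1) G by (rule bmat.subspace_diff)
  moreover have "cover_weight n (G - G') \<le> 2 * \<rho>"
    using cover_weight_le[OF is_cover_diff_of_agree[OF _ agree]] F by simp
  ultimately have "G - G' = 0"
    using assms(2) by (meson not_less)
  then show "G = G'" by simp
qed

lemma graph_code_of_bmats:
  assumes "C \<subseteq> bmats n"
  shows "graph_code_of n C = C"
  using assms by (auto simp: graph_code_of_def graphs_def adj_matrix_def)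

theorem theorem2:
  fixes n \<rho> :: nat and C :: "bmat set"
  assumes "0 < n" and "0 < \<rho>" and "2 * \<rho> < n"
    and "linear_array_code n (n * (n - 2 * \<rho>)) (2 * \<rho> + 1) C"
  shows "linear_graph_code n (graph_code_of n C)
    \<and> graph_code_dim (graph_code_of n C) = real (n * (n - 2 * \<rho>))
    \<and> node_erasure_correcting n \<rho> (graph_code_of n C)"
proof -
  from assms(4) have C: "C \<subseteq> bmats n" "bmat.subspace C"
    and dim: "bmat.dim C = n * (n - 2 * \<rho>)"
    and weight: "\<forall>A\<in>C. A \<noteq> 0 \<longrightarrow> 2 * \<rho> < cover_weight n A"
    unfolding linear_array_code_def by auto
  have "card C = 2 ^ (n * (n - 2 * \<rho>))"
    using bmat.card_subspace_of_dim_pos[OF finite_UNIV_bit C(2)] dim assms(1,3)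
    by (simp add: card_UNIV_bit)
  then have "graph_code_dim C = real (n * (n - 2 * \<rho>))"
    by (simp add: graph_code_dim_def)
  moreover have "linear_graph_code n C"
    using C by (simp add: linear_graph_code_def graphs_def)
  moreover have "node_erasure_correcting n \<rho> C"
    using C(2) weight by (rule node_erasure_correcting_of_cover_weight)
  ultimately show ?thesis
    unfolding graph_code_of_bmats[OF C(1)] by blast
qed

end
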